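(* For every $n\ge 6$, the diameter of the skeleton of $\mathrm{PYR}(n)$ equals $2$.
   Context: Let $K_n$ be the complete undirected graph on vertex set $\{1,\dots,n\}$ with edge set $E$. A Hamiltonian cycle $\langle 1,i_1,\dots,i_r,n,j_1,\dots,j_{n-r-2}\rangle$ is called a pyramidal tour if $i_1<i_2<\dots<i_r$ and $j_1>j_2>\dots>j_{n-r-2}$; tours are undirected. Let $PT_n$ be the set of all pyramidal tours. For $x\in PT_n$ its characteristic vector $x^v\in\mathbb{R}^E$ has $x^v_e=1$ if edge $e$ lies in $x$ and $0$ otherwise. The pyramidal tours polytope is $\mathrm{PYR}(n)=\operatorname{conv}\{x^v : x\in PT_n\}$. The skeleton ($1$-skeleton) of a polytope is the graph whose vertices are the polytope's vertices and whose edges are its one-dimensional faces. The diameter of a graph is the maximum, over pairs of vertices, of the edge distance between them. *)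

theory Defs
  imports "HOL-Analysis.Analysis" "HOL-Library.Extended_Nat"
begin

text \<open>Vertices of K_n: a finite linearly ordered type 'n (order = labelling 1..n).
  Edge space R^E is represented (linear injective embedding) inside real^('n\<times>'n):
  an undirected edge {i,j} contributes to both coordinates (i,j) and (j,i).\<close>

definition pyr_cycle :: "'n::{finite,linorder} set \<Rightarrow> 'n list" where
  "pyr_cycle A = [Min UNIV] @ sorted_list_of_set A @ [Max UNIV]
     @ rev (sorted_list_of_set (UNIV - A - {Min UNIV, Max UNIV}))"

definition cycle_edges :: "'a list \<Rightarrow> 'a set set" where
  "cycle_edges xs = {{xs ! i, xs ! ((Suc i) mod length xs)} | i. i < length xs}"

definition pyramidal_tours :: "'n::{finite,linorder} set set set" where
  "pyramidal_tours = {cycle_edges (pyr_cycle A) | A. A \<subseteq> UNIV - {Min UNIV, Max UNIV}}"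

definition char_vec :: "'n::{finite,linorder} set set \<Rightarrow> real ^ ('n \<times> 'n)" where
  "char_vec T = (\<chi> e. if {fst e, snd e} \<in> T then 1 else 0)"

definition PYR :: "(real ^ ('n::{finite,linorder} \<times> 'n)) set" where
  "PYR = convex hull (char_vec ` pyramidal_tours)"

definition skel_vertices :: "'a::euclidean_space set \<Rightarrow> 'a set" where
  "skel_vertices P = {v. v extreme_point_of P}"

definition skel_adj :: "'a::euclidean_space set \<Rightarrow> 'a \<Rightarrow> 'a \<Rightarrow> bool" where
  "skel_adj P u v \<longleftrightarrow> u \<noteq> v \<and> u \<in> skel_vertices P \<and> v \<in> skel_vertices P \<and>
     (\<exists>F. F face_of P \<and> aff_dim F = 1 \<and> u \<in> F \<and> v \<in> F)"

text \<open>Graph distance (infinity if no path) and diameter.\<close>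
definition graph_dist :: "'a set \<Rightarrow> ('a \<Rightarrow> 'a \<Rightarrow> bool) \<Rightarrow> 'a \<Rightarrow> 'a \<Rightarrow> enat" where
  "graph_dist V adj u v = (INF k \<in> {k. \<exists>p. length p = Suc k \<and> hd p = u \<and> last p = v \<and>
      set p \<subseteq> V \<and> (\<forall>i<k. adj (p ! i) (p ! Suc i))}. enat k)"

definition graph_diameter :: "'a set \<Rightarrow> ('a \<Rightarrow> 'a \<Rightarrow> bool) \<Rightarrow> enat" where
  "graph_diameter V adj = (SUP u \<in> V. SUP v \<in> V. graph_dist V adj u v)"

end

theory Submission
  imports Defs
begin

text \<open>
  A pyramidal tour is determined by the set \<open>A\<close> of inner vertices it visits on its way up: its
  edges join consecutive vertices of \<open>A \<union> {vmin, vmax}\<close> and consecutive vertices of \<open>-A\<close>.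
  The tour \<open>H\<close> of \<open>A = {}\<close>, the path \<open>vmin, \<dots>, vmax\<close> closed by \<open>{vmin, vmax}\<close>, is adjacent
  in the skeleton to every other tour \<open>T\<close>: the linear functional rewarding the edges of
  \<open>T \<inter> H\<close> and penalising those outside \<open>T \<union> H\<close> is maximised over all tours exactly by the
  tours inside \<open>T \<union> H\<close>, and these are only \<open>T\<close> and \<open>H\<close>, since a non-unit edge of a tour jumps
  over a block of vertices which that tour puts into one class. Hence the diameter is at most 2.
  It is at least 2 because, for the second to fourth smallest vertices \<open>a < b < c\<close>, the
  characteristic vectors \<open>x\<close> of the tours through \<open>{b}\<close>, \<open>{c}\<close>, \<open>{a, b}\<close>, \<open>{a, c}\<close> satisfy \<open>x\<^sub>b + x\<^sub>c = x\<^sub>a\<^sub>b + x\<^sub>a\<^sub>c\<close>, so the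
  segment from \<open>x\<^sub>b\<close> to \<open>x\<^sub>c\<close> is not an edge as soon as the four tours are distinct.
\<close>

section \<open>Edges of monotone paths\<close>

fun path_edges :: "'a list \<Rightarrow> 'a set set" where
  "path_edges (x # y # ys) = insert {x, y} (path_edges (y # ys))"
| "path_edges _ = {}"

lemma path_edges_append: "path_edges (xs @ y # ys) = path_edges (xs @ [y]) \<union> path_edges (y # ys)"
  by (induction xs rule: path_edges.induct) auto

lemma path_edges_rev [simp]: "path_edges (rev xs) = path_edges xs"
proof (induction xs rule: path_edges.induct)
  case (1 x y ys)
  have "path_edges (rev (x # y # ys)) = path_edges (rev ys @ [y]) \<union> path_edges [y, x]"
    using path_edges_append[of "rev ys" y "[x]"] by simp
  then show ?case using 1 by (auto simp: insert_commute)
qed auto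

lemma path_edges_conv_nth: "path_edges xs = (\<lambda>i. {xs ! i, xs ! Suc i}) ` {..<length xs - 1}"
proof (induction xs rule: path_edges.induct)
  case (1 x y ys)
  then show ?case by (simp add: lessThan_Suc_eq_insert_0 image_image)
qed auto

lemma path_edges_subset: "e \<in> path_edges xs \<Longrightarrow> e \<subseteq> set xs"
  by (induction xs rule: path_edges.induct) auto

lemma card_path_edges: "distinct xs \<Longrightarrow> card (path_edges xs) = length xs - 1"
proof (induction xs rule: path_edges.induct)
  case (1 x y ys)
  have "{x, y} \<notin> path_edges (y # ys)"
    using 1(2) path_edges_subset by fastforce
  moreover have "finite (path_edges (y # ys))"
    by (simp add: path_edges_conv_nth)
  ultimately show ?case using 1 by simp
qed auto

lemma cycle_edges_eq_path_edges:
  assumes "xs \<noteq> []"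
  shows "cycle_edges xs = path_edges (xs @ [hd xs])"
proof -
  have "(xs @ [hd xs]) ! Suc i = xs ! (Suc i mod length xs)" if "i < length xs" for i
    using that assms by (cases "Suc i = length xs") (auto simp: nth_append hd_conv_nth)
  then show ?thesis
    unfolding cycle_edges_def path_edges_conv_nth by (auto simp: nth_append)
qed

definition consecutive :: "'a::linorder set \<Rightarrow> 'a \<Rightarrow> 'a \<Rightarrow> bool" where
  "consecutive S x y \<longleftrightarrow> x \<in> S \<and> y \<in> S \<and> x < y \<and> (\<forall>t\<in>S. \<not> (x < t \<and> t < y))"

definition consecutive_pairs :: "'a::linorder set \<Rightarrow> 'a set set" where
  "consecutive_pairs S = {{x, y} | x y. consecutive S x y}"

lemma consecutive_subset:
  "consecutive T x y \<Longrightarrow> S \<subseteq> T \<Longrightarrow> x \<in> S \<Longrightarrow> y \<in> S \<Longrightarrow> consecutive S x y"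
  unfolding consecutive_def by auto

lemma consecutive_pairs_memD:
  assumes "{u, v} \<in> consecutive_pairs S" "u < v"
  shows "consecutive S u v"
  using assms unfolding consecutive_pairs_def consecutive_def by (auto simp: doubleton_eq_iff)

lemma consecutive_insert_min:
  assumes "\<forall>t\<in>set (y # ys). x < t" "sorted_wrt (<) (y # ys)"
  shows "consecutive (insert x (set (y # ys))) u v \<longleftrightarrow>
    (u = x \<and> v = y) \<or> consecutive (set (y # ys)) u v"
  using assms unfolding consecutive_def by (auto 0 3 dest: less_asym)

lemma path_edges_sorted: "sorted_wrt (<) xs \<Longrightarrow> path_edges xs = consecutive_pairs (set xs)"
proof (induction xs rule: path_edges.induct)
  case (1 x y ys)
  have "\<forall>t\<in>set (y # ys). x < t" "sorted_wrt (<) (y # ys)" using 1(2) by auto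
  from consecutive_insert_min[OF this] have
    "consecutive_pairs (set (x # y # ys)) = insert {x, y} (consecutive_pairs (set (y # ys)))"
    unfolding consecutive_pairs_def by auto
  with 1 show ?case by simp
qed (auto simp: consecutive_pairs_def consecutive_def)

lemma card_consecutive_pairs: "finite S \<Longrightarrow> card (consecutive_pairs S) = card S - 1"
  using path_edges_sorted[OF strict_sorted_list_of_set, of S]
    card_path_edges[of "sorted_list_of_set S"] by (simp add: distinct_card)

lemma consecutive_around:
  fixes S :: "'a::{finite,linorder} set"
  assumes "z < w" "s \<in> S" "s \<le> z" "t \<in> S" "w \<le> t" "\<forall>r. \<not> (z < r \<and> r < w)"
  obtains x y where "consecutive S x y" "x \<le> z" "w \<le> y"
proof -
  define x where "x = Max {r \<in> S. r \<le> z}"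
  define y where "y = Min {r \<in> S. w \<le> r}"
  have "{r \<in> S. r \<le> z} \<noteq> {}" "{r \<in> S. w \<le> r} \<noteq> {}" using assms by auto
  then have x: "x \<in> S" "x \<le> z" and y: "y \<in> S" "w \<le> y"
    using Max_in[of "{r \<in> S. r \<le> z}"] Min_in[of "{r \<in> S. w \<le> r}"] unfolding x_def y_def by auto
  have x_max: "r \<le> x" if "r \<in> S" "r \<le> z" for r using that unfolding x_def by simp
  have y_min: "y \<le> r" if "r \<in> S" "w \<le> r" for r using that unfolding y_def by simp
  have "\<not> (x < r \<and> r < y)" if "r \<in> S" for r
  proof (cases "r \<le> z")
    case True
    then show ?thesis using x_max[OF that] by (meson not_le)
  next
    case False
    then have "w \<le> r" using assms(6) by (meson leI)
    then show ?thesis using y_min[OF that] by (meson not_le)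
  qed
  then have "consecutive S x y"
    unfolding consecutive_def using x y assms(1) by auto
  then show thesis using x y by (intro that)
qed

section \<open>Edges of the skeleton of a polytope\<close>

lemma skel_adj_convex_hullI:
  fixes S :: "'a::euclidean_space set"
  assumes "finite S" "u \<in> S" "v \<in> S" "u \<noteq> v"
    and le: "\<forall>s\<in>S. c \<bullet> s \<le> \<mu>" and "c \<bullet> u = \<mu>" "c \<bullet> v = \<mu>"
    and unique: "\<forall>s\<in>S. c \<bullet> s = \<mu> \<longrightarrow> s = u \<or> s = v"
  shows "skel_adj (convex hull S) u v"
proof -
  let ?P = "convex hull S"
  have "?P \<subseteq> {y. c \<bullet> y \<le> \<mu>}"
    using le by (intro hull_minimal) (auto simp: convex_halfspace_le)
  then have face: "?P \<inter> {y. c \<bullet> y = \<mu>} face_of ?P" (is "?F face_of _")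
    by (intro face_of_Int_supporting_hyperplane_le) auto
  then obtain T where T: "T \<subseteq> S" "?F = convex hull T"
    using face_of_convex_hull_subset[OF finite_imp_compact] assms(1) by metis
  then have "T \<subseteq> {u, v}"
    using unique hull_subset[of T convex] by blast
  then have "?F \<subseteq> convex hull {u, v}"
    using T(2) hull_mono by metis
  moreover have "convex hull {u, v} \<subseteq> ?F"
    using assms(2-3,6-7) face_of_imp_convex[OF face] hull_subset[of S convex]
    by (intro hull_minimal) auto
  ultimately have F: "?F = closed_segment u v"
    by (simp add: segment_convex_hull)
  then have dim: "aff_dim ?F = 1"
    using assms(4) by (simp add: segment_convex_hull aff_dim_convex_hull)
  have ext: "u extreme_point_of ?P" "v extreme_point_of ?P"
    using extreme_point_of_face[OF face] extreme_point_of_segment F by auto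
  have mem: "u \<in> ?F" "v \<in> ?F"
    using F by auto
  have "\<exists>F. F face_of ?P \<and> aff_dim F = 1 \<and> u \<in> F \<and> v \<in> F"
    using face dim mem by blast
  then show ?thesis
    using assms(4) ext unfolding skel_adj_def skel_vertices_def by simp
qed

lemma not_skel_adj_if_same_midpoint:
  fixes u v w z :: "'a::euclidean_space"
  assumes w: "w extreme_point_of P" and z: "z \<in> P"
    and distinct: "w \<noteq> u" "w \<noteq> v" "w \<noteq> z" and mid: "u + v = w + z"
  shows "\<not> skel_adj P u v"
proof
  assume adj: "skel_adj P u v"
  then have "u \<noteq> v" and ext: "u extreme_point_of P" "v extreme_point_of P"
    and "\<exists>F. F face_of P \<and> aff_dim F = 1 \<and> u \<in> F \<and> v \<in> F"
    unfolding skel_adj_def skel_vertices_def by simp_all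
  then obtain F where F: "F face_of P" "aff_dim F = 1" "u \<in> F" "v \<in> F"
    by blast
  have "closed_segment u v \<subseteq> F"
    using face_of_imp_convex[OF F(1)] F(3,4) by (simp add: convex_contains_segment)
  then have "midpoint u v \<in> F"
    using midpoint_in_closed_segment by blast
  moreover have "midpoint u v \<in> open_segment w z"
    using mid midpoint_in_open_segment[of w z] distinct(3) unfolding midpoint_def by simp
  ultimately have "w \<in> F"
    using face_ofD[OF F(1) _ _ z] w unfolding extreme_point_of_def by blast
  have "collinear F"
    using F(2) by (simp add: collinear_aff_dim)
  then have "collinear {u, v, w}"
    by (rule collinear_subset) (use F(3,4) \<open>w \<in> F\<close> in auto)
  then have "u \<in> closed_segment v w \<or> v \<in> closed_segment w u \<or> w \<in> closed_segment u v"
    by (simp only: collinear_between_cases between_mem_segment)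
  then have "u \<in> open_segment v w \<or> v \<in> open_segment w u \<or> w \<in> open_segment u v"
    using distinct \<open>u \<noteq> v\<close> unfolding open_segment_def by blast
  then show False
    using ext w unfolding extreme_point_of_def by blast
qed

section \<open>Graphs with a dominating vertex\<close>

lemma graph_dist_le_path:
  assumes "length p = Suc k" "hd p = u" "last p = v" "set p \<subseteq> V" "\<forall>i<k. adj (p ! i) (p ! Suc i)"
  shows "graph_dist V adj u v \<le> enat k"
  unfolding graph_dist_def by (rule INF_lower) (use assms in blast)

lemma two_le_graph_dist:
  assumes "u \<noteq> v" "\<not> adj u v"
  shows "2 \<le> graph_dist V adj u v"
  unfolding graph_dist_def
proof (rule INF_greatest)
  fix k assume "k \<in> {k. \<exists>p. length p = Suc k \<and> hd p = u \<and> last p = v \<and> set p \<subseteq> V \<and>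
      (\<forall>i<k. adj (p ! i) (p ! Suc i))}"
  then obtain p where p: "length p = Suc k" "hd p = u" "last p = v" "\<forall>i<k. adj (p ! i) (p ! Suc i)"
    by blast
  have "p \<noteq> []" using p(1) by auto
  then have "p ! 0 = u" "p ! k = v"
    using p(1-3) by (simp_all add: hd_conv_nth last_conv_nth)
  then have "k \<noteq> 0" "k \<noteq> 1"
    using assms p(4) by (metis, metis One_nat_def lessI)
  then show "2 \<le> enat k"
    by (simp add: numeral_eq_enat)
qed

lemma graph_diameter_eq_2_if_hub:
  assumes h: "h \<in> V" and hub: "\<And>x. x \<in> V \<Longrightarrow> x \<noteq> h \<Longrightarrow> adj x h \<and> adj h x"
    and uv: "u \<in> V" "v \<in> V" "u \<noteq> v" "\<not> adj u v"
  shows "graph_diameter V adj = 2"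
proof (rule antisym)
  have le2: "enat k \<le> 2" if "k \<le> 2" for k
    using that by (simp add: numeral_eq_enat)
  have "graph_dist V adj x y \<le> 2" if "x \<in> V" "y \<in> V" for x y
  proof -
    consider "x = y" | "x \<noteq> y" "x = h \<or> y = h" | "x \<noteq> h" "y \<noteq> h"
      by blast
    then show ?thesis
    proof cases
      case 1
      then have "graph_dist V adj x y \<le> enat 0"
        using that by (intro graph_dist_le_path[of "[x]"]) auto
      then show ?thesis using le2[of 0] by (auto intro: order.trans)
    next
      case 2
      then have "adj x y" using hub that by blast
      then have "graph_dist V adj x y \<le> enat 1"
        using that by (intro graph_dist_le_path[of "[x, y]"]) auto
      then show ?thesis using le2[of 1] by (auto intro: order.trans)
    next
      case 3
      then have "graph_dist V adj x y \<le> enat 2"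
        using that h hub by (intro graph_dist_le_path[of "[x, h, y]"]) (auto simp: less_2_cases_iff)
      then show ?thesis using le2[of 2] by (auto intro: order.trans)
    qed
  qed
  then show "graph_diameter V adj \<le> 2"
    unfolding graph_diameter_def by (intro SUP_least) auto
  have "2 \<le> graph_dist V adj u v"
    using uv(3,4) by (rule two_le_graph_dist)
  also have "\<dots> \<le> graph_diameter V adj"
    unfolding graph_diameter_def using uv(1,2) by (intro SUP_upper2[of u] SUP_upper) auto
  finally show "2 \<le> graph_diameter V adj" .
qed

section \<open>Pyramidal tours\<close>

abbreviation vmin :: "'n::{finite,linorder}" where "vmin \<equiv> Min UNIV"
abbreviation vmax :: "'n::{finite,linorder}" where "vmax \<equiv> Max UNIV"
abbreviation inner_vertices :: "'n::{finite,linorder} set" where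
  "inner_vertices \<equiv> UNIV - {vmin, vmax}"

lemma vmin_less: "t \<noteq> vmin \<Longrightarrow> vmin < (t::'n::{finite,linorder})"
  by (simp add: order.not_eq_order_implies_strict)

lemma less_vmax: "t \<noteq> vmax \<Longrightarrow> (t::'n::{finite,linorder}) < vmax"
  by (simp add: order.not_eq_order_implies_strict)

lemma exists_inner_vertex:
  assumes "3 \<le> CARD('n)"
  obtains t :: "'n::{finite,linorder}" where "vmin < t" "t < vmax"
proof -
  have "card {vmin, vmax :: 'n} < CARD('n)"
    using assms by (simp add: card_insert_if)
  then obtain t :: 'n where "t \<notin> {vmin, vmax}"
    by (metis UNIV_I card_mono finite leD subsetI)
  then show thesis using that vmin_less less_vmax by blast
qed

lemma vmin_less_vmax: "3 \<le> CARD('n) \<Longrightarrow> vmin < (vmax :: 'n::{finite,linorder})"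
  by (metis exists_inner_vertex order.strict_trans)

text \<open>A pyramidal tour through the inner vertices \<open>A\<close> is the union of two monotone paths from
  \<open>vmin\<close> to \<open>vmax\<close>, through the vertex classes \<open>A \<union> {vmin, vmax}\<close> and \<open>-A\<close>.\<close>

definition pyr_classes :: "'n::{finite,linorder} set \<Rightarrow> 'n set set" where
  "pyr_classes A = {A \<union> {vmin, vmax}, - A}"

definition pyr_edges :: "'n::{finite,linorder} set \<Rightarrow> 'n set set" where
  "pyr_edges A = (\<Union>S \<in> pyr_classes A. consecutive_pairs S)"

lemma pyr_edges_eq:
  "pyr_edges A = consecutive_pairs (A \<union> {vmin, vmax}) \<union> consecutive_pairs (- A)"
  by (simp add: pyr_edges_def pyr_classes_def)

lemma cycle_edges_pyr_cycle:
  fixes A :: "'n::{finite,linorder} set"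
  assumes A: "A \<subseteq> inner_vertices" and ends: "vmin < (vmax::'n)"
  shows "cycle_edges (pyr_cycle A) = pyr_edges A"
proof -
  define up where "up = sorted_list_of_set A"
  define down where "down = sorted_list_of_set (UNIV - A - {vmin, vmax::'n})"
  have up: "sorted_wrt (<) (vmin # up @ [vmax])" "set (vmin # up @ [vmax]) = A \<union> {vmin, vmax}"
    using A ends vmin_less less_vmax unfolding up_def
    by (auto simp: sorted_wrt_append intro: strict_sorted_list_of_set)
  have down: "sorted_wrt (<) (vmin # down @ [vmax])" "set (vmin # down @ [vmax]) = - A"
    using A ends vmin_less less_vmax unfolding down_def
    by (auto simp: sorted_wrt_append intro: strict_sorted_list_of_set)
  have "pyr_cycle A @ [hd (pyr_cycle A)] = (vmin # up) @ vmax # (rev down @ [vmin])"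
    unfolding pyr_cycle_def up_def down_def by simp
  then have "cycle_edges (pyr_cycle A)
      = path_edges (vmin # up @ [vmax]) \<union> path_edges (rev (vmin # down @ [vmax]))"
    using path_edges_append[of "vmin # up" vmax "rev down @ [vmin]"]
    by (simp add: cycle_edges_eq_path_edges pyr_cycle_def del: path_edges_rev)
  also have "\<dots> = pyr_edges A"
    using up down unfolding path_edges_rev by (simp add: path_edges_sorted pyr_edges_eq)
  finally show ?thesis .
qed

lemma pyramidal_tours_eq:
  assumes "vmin < (vmax::'n::{finite,linorder})"
  shows "(pyramidal_tours :: 'n set set set) = pyr_edges ` Pow inner_vertices"
  unfolding pyramidal_tours_def using cycle_edges_pyr_cycle[OF _ assms] by auto

lemma pyr_classes_hub: "pyr_classes {} = {{vmin, vmax}, UNIV}"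
  by (simp add: pyr_classes_def)

lemma pyr_classes_eq_complement:
  assumes "A \<subseteq> inner_vertices" "S \<in> pyr_classes A"
  shows "pyr_classes A = {S, - S \<union> {vmin, vmax}}"
  using assms unfolding pyr_classes_def by (auto simp: Compl_eq_Diff_UNIV)

lemma pyr_edges_memI: "S \<in> pyr_classes A \<Longrightarrow> consecutive S u v \<Longrightarrow> {u, v} \<in> pyr_edges A"
  unfolding pyr_edges_def consecutive_pairs_def by blast

lemma pyr_edges_memE:
  assumes "{u, v} \<in> pyr_edges A" "u < v"
  obtains S where "S \<in> pyr_classes A" "consecutive S u v"
  using assms consecutive_pairs_memD unfolding pyr_edges_def by blast

lemma pyr_edges_elemE:
  assumes "e \<in> pyr_edges A"
  obtains u v where "e = {u, v}" "u < v"
  using assms unfolding pyr_edges_def consecutive_pairs_def consecutive_def by blast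

lemma pyr_edges_hub_memD:
  assumes "{u, v} \<in> pyr_edges {}" "u < v"
  shows "consecutive UNIV u v \<or> (u = vmin \<and> v = vmax)"
  using assms by (elim pyr_edges_memE) (auto simp: pyr_classes_hub consecutive_def)

lemma card_pyr_edges:
  fixes A :: "'n::{finite,linorder} set"
  assumes A: "A \<subseteq> inner_vertices" and t: "vmin < t" "t < (vmax::'n)"
  shows "card (pyr_edges A) = CARD('n)"
proof -
  let ?up = "A \<union> {vmin, vmax}"
  have disjoint: "consecutive_pairs ?up \<inter> consecutive_pairs (- A) = {}"
  proof (rule ccontr)
    assume "consecutive_pairs ?up \<inter> consecutive_pairs (- A) \<noteq> {}"
    then obtain u v where uv: "consecutive ?up u v" "{u, v} \<in> consecutive_pairs (- A)"
      unfolding consecutive_pairs_def by blast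
    then have "consecutive (- A) u v" using consecutive_pairs_memD consecutive_def by blast
    with uv(1) A have "u = vmin" "v = vmax" unfolding consecutive_def by auto
    with uv(1) \<open>consecutive (- A) u v\<close> t show False
      unfolding consecutive_def by (cases "t \<in> A") auto
  qed
  have "card ?up = card A + 2"
    using A t by (auto simp: card_insert_if)
  moreover have "card ?up \<le> CARD('n)"
    by (rule card_mono) simp_all
  moreover have "card (- A) = CARD('n) - card A"
    by (simp add: Compl_eq_Diff_UNIV card_Diff_subset)
  ultimately show ?thesis
    using disjoint card_Un_disjoint[of "consecutive_pairs ?up" "consecutive_pairs (- A)"]
    by (simp add: pyr_edges_eq card_consecutive_pairs)
qed

lemma pyr_edges_subset_imp_eq:
  fixes A C :: "'n::{finite,linorder} set"
  assumes "3 \<le> CARD('n)" "A \<subseteq> inner_vertices" "C \<subseteq> inner_vertices"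
    and "pyr_edges C \<subseteq> pyr_edges A"
  shows "pyr_edges C = pyr_edges A"
proof -
  obtain t :: 'n where "vmin < t" "t < vmax" using exists_inner_vertex assms(1) by blast
  then show ?thesis
    using assms card_pyr_edges by (metis card_subset_eq finite)
qed

lemma consecutive_ends_imp_eq: "consecutive S vmin vmax \<Longrightarrow> S = {vmin, vmax}"
  unfolding consecutive_def using vmin_less less_vmax by blast

lemma pyr_edges_eq_hub_if_ends:
  fixes A :: "'n::{finite,linorder} set"
  assumes A: "A \<subseteq> inner_vertices" and ends: "{vmin, vmax} \<in> pyr_edges A"
  shows "pyr_edges A = pyr_edges {}"
proof -
  obtain u v :: 'n where "{vmin, vmax} = {u, v}" "u < v"
    using ends by (rule pyr_edges_elemE)
  then have "vmin < (vmax::'n)"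
    using vmin_less by (metis doubleton_eq_iff insert_absorb2 less_irrefl)
  then obtain S where "S \<in> pyr_classes A" "consecutive S vmin vmax"
    using pyr_edges_memE[OF ends] by blast
  then have "pyr_classes A = {{vmin, vmax}, - {vmin, vmax} \<union> {vmin, vmax}}"
    using pyr_classes_eq_complement[OF A] consecutive_ends_imp_eq by blast
  also have "\<dots> = pyr_classes {}"
    by (simp add: pyr_classes_hub Un_commute)
  finally show ?thesis
    by (simp add: pyr_edges_def)
qed

lemma pyr_edges_subset_if_subset_hub:
  fixes A C :: "'n::{finite,linorder} set"
  assumes A: "A \<subseteq> inner_vertices" and C: "C \<subseteq> inner_vertices"
    and sub: "pyr_edges C \<subseteq> pyr_edges A \<union> pyr_edges {}"
    and ends: "{vmin, vmax} \<notin> pyr_edges C"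
  shows "pyr_edges C \<subseteq> pyr_edges A"
proof
  fix e assume eC: "e \<in> pyr_edges C"
  then obtain z w where e: "e = {z, w}" "z < w" by (rule pyr_edges_elemE)
  show "e \<in> pyr_edges A"
  proof (rule ccontr)
    assume "e \<notin> pyr_edges A"
    with sub eC e ends have zw: "consecutive UNIV z w"
      using pyr_edges_hub_memD by blast
    obtain S where S: "S \<in> pyr_classes C" "consecutive S z w"
      using eC e by (auto elim: pyr_edges_memE)
    let ?S' = "- S \<union> {vmin, vmax}"
    have S': "?S' \<in> pyr_classes C"
      using pyr_classes_eq_complement[OF C S(1)] by blast
    have ends_of_S_S': "z \<in> ?S' \<Longrightarrow> z \<in> {vmin, vmax}" "w \<in> ?S' \<Longrightarrow> w \<in> {vmin, vmax}"
      using S(2) unfolding consecutive_def by auto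
    txt \<open>The edge of the other class \<open>?S'\<close> jumping over the \<open>S\<close>-block containing \<open>z, w\<close>
      is neither a unit edge nor \<open>{vmin, vmax}\<close>, so it is an edge of the \<open>A\<close>-tour; hence the
      block, and with it \<open>{z, w}\<close>, lies in one class of \<open>A\<close>.\<close>
    have between: "\<forall>r. \<not> (z < r \<and> r < w)"
      using zw unfolding consecutive_def by simp
    obtain x y where xy: "consecutive ?S' x y" "x \<le> z" "w \<le> y"
      by (rule consecutive_around[of z w vmin ?S' vmax]) (simp_all add: e(2) between)
    have "{x, y} \<in> pyr_edges C"
      using xy(1) S' by (rule pyr_edges_memI[rotated])
    moreover have "x < y" using xy(1) unfolding consecutive_def by simp
    moreover have "\<not> consecutive UNIV x y"
    proof
      assume "consecutive UNIV x y"
      then have "\<not> (x < z \<and> z < y)" "\<not> (x < w \<and> w < y)"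
        unfolding consecutive_def by blast+
      then have "x = z" "y = w"
        using xy(2,3) e(2) by auto
      then have "e = {vmin, vmax}"
        using xy(1) ends_of_S_S' e unfolding consecutive_def by auto
      then show False using eC ends by simp
    qed
    ultimately have "{x, y} \<in> pyr_edges A"
      using sub ends pyr_edges_hub_memD by blast
    then obtain R where R: "R \<in> pyr_classes A" "consecutive R x y"
      using \<open>x < y\<close> by (rule pyr_edges_memE)
    let ?R' = "- R \<union> {vmin, vmax}"
    have "?R' \<in> pyr_classes A"
      using pyr_classes_eq_complement[OF A R(1)] by blast
    moreover have "t \<in> ?R'" if "t \<in> {z, w}" for t
    proof (cases "t = x \<or> t = y")
      case True
      then show ?thesis using that xy(1) ends_of_S_S' unfolding consecutive_def by auto
    next
      case False
      then have "x < t" "t < y" using that xy e(2) by auto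
      then show ?thesis using R(2) unfolding consecutive_def by auto
    qed
    ultimately have "e \<in> pyr_edges A"
      using consecutive_subset[OF zw, of ?R'] e(1) by (blast intro: pyr_edges_memI)
    with \<open>e \<notin> pyr_edges A\<close> show False ..
  qed
qed

lemma pyr_edges_subset_tour_union_hub:
  fixes A C :: "'n::{finite,linorder} set"
  assumes "3 \<le> CARD('n)" "A \<subseteq> inner_vertices" "C \<subseteq> inner_vertices"
    and "pyr_edges C \<subseteq> pyr_edges A \<union> pyr_edges {}"
  shows "pyr_edges C = pyr_edges A \<or> pyr_edges C = pyr_edges {}"
  using assms pyr_edges_eq_hub_if_ends pyr_edges_subset_if_subset_hub pyr_edges_subset_imp_eq
  by metis

section \<open>The tour of \<open>A = {}\<close> is adjacent to every tour\<close>

definition doubleton_family :: "'a set set \<Rightarrow> bool" where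
  "doubleton_family X \<longleftrightarrow> (\<forall>e\<in>X. \<exists>a b. e = {a, b})"

lemma doubleton_family_pyr_edges: "doubleton_family (pyr_edges A)"
  unfolding doubleton_family_def by (blast elim: pyr_edges_elemE)

lemma char_vec_inj:
  assumes "doubleton_family X" "doubleton_family Y" "char_vec X = char_vec Y"
  shows "X = Y"
proof -
  have "{a, b} \<in> X \<longleftrightarrow> {a, b} \<in> Y" for a b
    using arg_cong[OF assms(3), of "\<lambda>x. x $ (a, b)"] by (simp add: char_vec_def split: if_splits)
  moreover have "\<exists>a b. e = {a, b}" if "e \<in> X \<union> Y" for e
    using assms(1,2) that unfolding doubleton_family_def by blast
  ultimately show ?thesis
    by (metis Un_iff subsetI subset_antisym)
qed

lemma char_vec_add: "char_vec X + char_vec Y = char_vec (X \<inter> Y) + char_vec (X \<union> Y)"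
  unfolding char_vec_def by (simp add: vec_eq_iff)

definition agreement_weight ::
  "'n::{finite,linorder} set set \<Rightarrow> 'n set set \<Rightarrow> real ^ ('n \<times> 'n)" where
  "agreement_weight X Y = (\<chi> p. if {fst p, snd p} \<in> X \<inter> Y then 1
      else if {fst p, snd p} \<in> X \<union> Y then 0 else -1)"

lemma inner_agreement_weight_slack:
  "agreement_weight X Y \<bullet> char_vec X - agreement_weight X Y \<bullet> char_vec W
     = (\<Sum>p\<in>UNIV. if {fst p, snd p} \<in> W - (X \<union> Y) then 1
          else if {fst p, snd p} \<in> (X \<inter> Y) - W then 1 else 0)"
  unfolding inner_vec_def sum_subtractf[symmetric]
  by (rule sum.cong) (auto simp: agreement_weight_def char_vec_def)

lemma inner_agreement_weight_tie:
  "agreement_weight X Y \<bullet> char_vec Y = agreement_weight X Y \<bullet> char_vec X"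
  unfolding inner_vec_def by (rule sum.cong) (auto simp: agreement_weight_def char_vec_def)

lemma inner_agreement_weight_le:
  "agreement_weight X Y \<bullet> char_vec W \<le> agreement_weight X Y \<bullet> char_vec X"
proof -
  have "0 \<le> (\<Sum>p\<in>UNIV. if {fst p, snd p} \<in> W - (X \<union> Y) then 1
          else if {fst p, snd p} \<in> (X \<inter> Y) - W then 1 else 0 :: real)"
    by (rule sum_nonneg) simp
  then show ?thesis
    using inner_agreement_weight_slack[of X Y W] by linarith
qed

lemma inner_agreement_weight_eqD:
  assumes W: "doubleton_family W"
    and eq: "agreement_weight X Y \<bullet> char_vec W = agreement_weight X Y \<bullet> char_vec X"
  shows "W \<subseteq> X \<union> Y"
proof
  fix e assume "e \<in> W"
  then obtain a b where e: "e = {a, b}" using W unfolding doubleton_family_def by blast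
  have "(\<Sum>p\<in>UNIV. if {fst p, snd p} \<in> W - (X \<union> Y) then 1
          else if {fst p, snd p} \<in> (X \<inter> Y) - W then 1 else 0 :: real) = 0"
    using inner_agreement_weight_slack[of X Y W] eq by simp
  then have "\<forall>p\<in>UNIV. (if {fst p, snd p} \<in> W - (X \<union> Y) then 1
          else if {fst p, snd p} \<in> (X \<inter> Y) - W then 1 else 0 :: real) = 0"
    by (subst (asm) sum_nonneg_eq_0_iff) auto
  then have "{a, b} \<notin> W - (X \<union> Y)"
    by (metis (no_types, lifting) UNIV_I fst_conv snd_conv zero_neq_one)
  with \<open>e \<in> W\<close> e show "e \<in> X \<union> Y"
    by blast
qed

lemma skel_adj_pyr_edges_hub:
  fixes A :: "'n::{finite,linorder} set"
  assumes n: "3 \<le> CARD('n)" and A: "A \<subseteq> inner_vertices"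
    and ne: "pyr_edges A \<noteq> pyr_edges {}"
  shows "skel_adj (PYR :: (real ^ ('n \<times> 'n)) set)
    (char_vec (pyr_edges A)) (char_vec (pyr_edges {}))"
proof -
  have tours: "(pyramidal_tours :: 'n set set set) = pyr_edges ` Pow inner_vertices"
    using vmin_less_vmax[OF n] by (rule pyramidal_tours_eq)
  let ?c = "agreement_weight (pyr_edges A) (pyr_edges {})"
  have unique: "pyr_edges C = pyr_edges A \<or> pyr_edges C = pyr_edges {}"
    if "C \<subseteq> inner_vertices" "?c \<bullet> char_vec (pyr_edges C) = ?c \<bullet> char_vec (pyr_edges A)" for C
  proof -
    have "pyr_edges C \<subseteq> pyr_edges A \<union> pyr_edges {}"
      using that(2) by (intro inner_agreement_weight_eqD doubleton_family_pyr_edges)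
    then show ?thesis
      using pyr_edges_subset_tour_union_hub[OF n A that(1)] by blast
  qed
  show ?thesis
    unfolding PYR_def tours
  proof (rule skel_adj_convex_hullI[where c = ?c])
    show "char_vec (pyr_edges A) \<noteq> char_vec (pyr_edges {})"
      using ne char_vec_inj[OF doubleton_family_pyr_edges doubleton_family_pyr_edges] by blast
    show "?c \<bullet> char_vec (pyr_edges {}) = ?c \<bullet> char_vec (pyr_edges A)"
      by (rule inner_agreement_weight_tie)
  qed (use A in \<open>auto simp: inner_agreement_weight_le dest: unique\<close>)
qed

lemma skel_adj_PYR_hub:
  fixes x :: "real ^ ('n::{finite,linorder} \<times> 'n)"
  assumes n: "3 \<le> CARD('n)" and x: "x \<in> skel_vertices PYR" "x \<noteq> char_vec (pyr_edges {})"
  shows "skel_adj PYR x (char_vec (pyr_edges {}))"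
proof -
  have tours: "(pyramidal_tours :: 'n set set set) = pyr_edges ` Pow inner_vertices"
    using vmin_less_vmax[OF n] by (rule pyramidal_tours_eq)
  have "x \<in> char_vec ` pyramidal_tours"
    using x(1) unfolding skel_vertices_def PYR_def by (auto dest: extreme_point_of_convex_hull)
  then obtain A where A: "A \<subseteq> inner_vertices" "x = char_vec (pyr_edges A)"
    unfolding tours by auto
  with x(2) have "pyr_edges A \<noteq> pyr_edges {}" by auto
  with A show ?thesis
    using skel_adj_pyr_edges_hub[OF n] by simp
qed

section \<open>Two non-adjacent tours\<close>

lemma pyr_edges_via_lists:
  assumes "sorted_wrt (<) xs" "set xs = A \<union> {vmin, vmax}" "sorted_wrt (<) ys" "set ys = - A"
  shows "pyr_edges A = path_edges xs \<union> path_edges ys"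
  using assms by (simp add: pyr_edges_eq path_edges_sorted)

text \<open>\<open>R \<noteq> []\<close> makes \<open>d\<close> an inner vertex; with five vertices the tours through \<open>{a, b}\<close>
  and \<open>{c}\<close> would coincide.\<close>

locale five_smallest_vertices =
  fixes m a b c d :: "'n::{finite,linorder}" and R :: "'n list"
  assumes vertices: "sorted_list_of_set (UNIV :: 'n set) = m # a # b # c # d # R"
    and R: "R \<noteq> []"
begin

lemma vertices_sorted: "sorted_wrt (<) (m # a # b # c # d # R)"
  using strict_sorted_list_of_set[of "UNIV :: 'n set"] vertices by simp

lemma set_vertices: "set (m # a # b # c # d # R) = UNIV"
  using set_sorted_list_of_set[of "UNIV :: 'n set"] vertices by simp

lemma three_le_card: "3 \<le> CARD('n)"
  using arg_cong[OF vertices, of length] by simp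

lemma less_remaining: "\<forall>r\<in>set R. m < r \<and> a < r \<and> b < r \<and> c < r \<and> d < r"
  using vertices_sorted by auto

lemma m_eq_vmin: "m = vmin"
proof -
  have "m \<le> y" for y
  proof -
    have "y \<in> set (m # a # b # c # d # R)" using set_vertices by simp
    then show ?thesis using vertices_sorted by (auto simp: less_imp_le)
  qed
  then show ?thesis by (metis Min_eqI UNIV_I finite)
qed

lemma vmax_in_remaining: "vmax \<in> set R"
proof -
  obtain r where "r \<in> set R" using R by (cases R) auto
  then have "d < vmax" using less_remaining by (meson Max_ge finite UNIV_I less_le_trans)
  moreover have "vmax \<in> set (m # a # b # c # d # R)" using set_vertices by simp
  ultimately show ?thesis using vertices_sorted by auto
qed

lemma witnesses_less_vmax: "a < vmax" "b < vmax" "c < vmax" "d < vmax"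
  using less_remaining vmax_in_remaining by auto

lemmas witness_order = vertices_sorted set_vertices witnesses_less_vmax m_eq_vmin less_remaining

lemma pyr_edges_b: "pyr_edges {b} = {{m, b}, {b, vmax}, {m, a}, {a, c}, {c, d}} \<union> path_edges (d # R)"
proof -
  have "pyr_edges {b} = path_edges [m, b, vmax] \<union> path_edges (m # a # c # d # R)"
    by (rule pyr_edges_via_lists) (use witness_order in auto)
  then show ?thesis by (simp add: insert_commute)
qed

lemma pyr_edges_c: "pyr_edges {c} = {{m, c}, {c, vmax}, {m, a}, {a, b}, {b, d}} \<union> path_edges (d # R)"
proof -
  have "pyr_edges {c} = path_edges [m, c, vmax] \<union> path_edges (m # a # b # d # R)"
    by (rule pyr_edges_via_lists) (use witness_order in auto)
  then show ?thesis by (simp add: insert_commute)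
qed

lemma pyr_edges_ab: "pyr_edges {a, b} = {{m, a}, {a, b}, {b, vmax}, {m, c}, {c, d}} \<union> path_edges (d # R)"
proof -
  have "pyr_edges {a, b} = path_edges [m, a, b, vmax] \<union> path_edges (m # c # d # R)"
    by (rule pyr_edges_via_lists) (use witness_order in auto)
  then show ?thesis by (simp add: insert_commute)
qed

lemma pyr_edges_ac: "pyr_edges {a, c} = {{m, a}, {a, c}, {c, vmax}, {m, b}, {b, d}} \<union> path_edges (d # R)"
proof -
  have "pyr_edges {a, c} = path_edges [m, a, c, vmax] \<union> path_edges (m # b # d # R)"
    by (rule pyr_edges_via_lists) (use witness_order in auto)
  then show ?thesis by (simp add: insert_commute)
qed

lemma vertices_neq: "m \<noteq> a" "m \<noteq> b" "m \<noteq> c" "m \<noteq> d" "m \<noteq> vmax"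
  "a \<noteq> b" "a \<noteq> c" "a \<noteq> d" "a \<noteq> vmax" "b \<noteq> c" "b \<noteq> d" "b \<noteq> vmax"
  "c \<noteq> d" "c \<noteq> vmax" "d \<noteq> vmax"
  using vertices_sorted witnesses_less_vmax by (auto dest: less_imp_neq)

lemma remaining_edges_avoid: "e \<in> path_edges (d # R) \<Longrightarrow> m \<notin> e \<and> a \<notin> e \<and> b \<notin> e \<and> c \<notin> e"
  using path_edges_subset[of e "d # R"] vertices_sorted by auto

lemma witnesses_inner: "{a, b, c} \<subseteq> inner_vertices"
  using vertices_sorted witnesses_less_vmax m_eq_vmin by auto

lemma not_hub_edge: "y \<in> {b, c} \<Longrightarrow> {m, y} \<notin> pyr_edges {}"
  using pyr_edges_hub_memD[of m y] vertices_sorted witnesses_less_vmax m_eq_vmin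
  unfolding consecutive_def by auto

lemma pyr_edges_ne_hub:
  "pyr_edges {b} \<noteq> pyr_edges {}" "pyr_edges {c} \<noteq> pyr_edges {}" "pyr_edges {a, b} \<noteq> pyr_edges {}"
  using not_hub_edge unfolding pyr_edges_b pyr_edges_c pyr_edges_ab by blast+

lemma pyr_edges_witnesses_distinct:
  "pyr_edges {b} \<noteq> pyr_edges {c}" "pyr_edges {a, b} \<noteq> pyr_edges {b}"
  "pyr_edges {a, b} \<noteq> pyr_edges {c}" "pyr_edges {a, b} \<noteq> pyr_edges {a, c}"
proof -
  have "{c, d} \<notin> path_edges (d # R)" "{a, b} \<notin> path_edges (d # R)"
    using remaining_edges_avoid by blast+
  then have "{c, d} \<in> pyr_edges {b}" "{c, d} \<notin> pyr_edges {c}" "{c, d} \<in> pyr_edges {a, b}"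
    "{c, d} \<notin> pyr_edges {a, c}" "{a, b} \<in> pyr_edges {a, b}" "{a, b} \<notin> pyr_edges {b}"
    unfolding pyr_edges_b pyr_edges_c pyr_edges_ab pyr_edges_ac
    using vertices_neq vertices_neq[symmetric] by (auto simp: doubleton_eq_iff)
  then show "pyr_edges {b} \<noteq> pyr_edges {c}" "pyr_edges {a, b} \<noteq> pyr_edges {b}"
    "pyr_edges {a, b} \<noteq> pyr_edges {c}" "pyr_edges {a, b} \<noteq> pyr_edges {a, c}"
    by auto
qed

lemma pyr_edges_witnesses_midpoint:
  "char_vec (pyr_edges {b}) + char_vec (pyr_edges {c})
     = char_vec (pyr_edges {a, b}) + char_vec (pyr_edges {a, c})"
proof -
  have bc: "{{m, b}, {b, vmax}, {m, a}, {a, c}, {c, d}} \<inter> {{m, c}, {c, vmax}, {m, a}, {a, b}, {b, d}} = {{m, a}}"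
    and ab_ac: "{{m, a}, {a, b}, {b, vmax}, {m, c}, {c, d}} \<inter> {{m, a}, {a, c}, {c, vmax}, {m, b}, {b, d}} = {{m, a}}"
    using vertices_neq vertices_neq[symmetric] by (auto simp: doubleton_eq_iff)
  have int: "pyr_edges {b} \<inter> pyr_edges {c} = pyr_edges {a, b} \<inter> pyr_edges {a, c}"
    unfolding pyr_edges_b pyr_edges_c pyr_edges_ab pyr_edges_ac Un_Int_distrib2[symmetric] bc ab_ac ..
  have un: "pyr_edges {b} \<union> pyr_edges {c} = pyr_edges {a, b} \<union> pyr_edges {a, c}"
    unfolding pyr_edges_b pyr_edges_c pyr_edges_ab pyr_edges_ac by (simp add: insert_commute)
  show ?thesis
    unfolding char_vec_add[of "pyr_edges {b}"] char_vec_add[of "pyr_edges {a, b}"] int un ..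
qed

lemma not_skel_adj_witnesses:
  "\<not> skel_adj (PYR :: (real ^ ('n \<times> 'n)) set) (char_vec (pyr_edges {b})) (char_vec (pyr_edges {c}))"
proof (rule not_skel_adj_if_same_midpoint)
  have "skel_adj PYR (char_vec (pyr_edges {a, b})) (char_vec (pyr_edges ({} :: 'n set)))"
    using skel_adj_pyr_edges_hub[OF three_le_card] witnesses_inner pyr_edges_ne_hub by simp
  then show "char_vec (pyr_edges {a, b}) extreme_point_of (PYR :: (real ^ ('n \<times> 'n)) set)"
    unfolding skel_adj_def skel_vertices_def by simp
  have "pyr_edges {a, c} \<in> (pyramidal_tours :: 'n set set set)"
    using witnesses_inner by (simp add: pyramidal_tours_eq[OF vmin_less_vmax[OF three_le_card]])
  then show "char_vec (pyr_edges {a, c}) \<in> (PYR :: (real ^ ('n \<times> 'n)) set)"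
    unfolding PYR_def by (intro hull_inc imageI)
  show "char_vec (pyr_edges {a, b}) \<noteq> char_vec (pyr_edges {b})"
    "char_vec (pyr_edges {a, b}) \<noteq> char_vec (pyr_edges {c})"
    "char_vec (pyr_edges {a, b}) \<noteq> char_vec (pyr_edges {a, c})"
    using pyr_edges_witnesses_distinct char_vec_inj doubleton_family_pyr_edges by metis+
  show "char_vec (pyr_edges {b}) + char_vec (pyr_edges {c})
     = char_vec (pyr_edges {a, b}) + char_vec (pyr_edges {a, c})"
    by (rule pyr_edges_witnesses_midpoint)
qed

end

lemma five_smallest_vertices_exist:
  assumes "6 \<le> CARD('n)"
  obtains m a b c d :: "'n::{finite,linorder}" and R where "five_smallest_vertices m a b c d R"
proof -
  have "\<exists>m a b c d r R. xs = m # a # b # c # d # r # R" if "6 \<le> length xs" for xs :: "'n list"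
    using that by (auto simp: numeral_eq_Suc Suc_le_length_iff)
  then obtain m a b c d r R where "sorted_list_of_set (UNIV :: 'n set) = m # a # b # c # d # r # R"
    using assms by (metis length_sorted_list_of_set)
  then show thesis
    using that[of m a b c d "r # R"] by (simp add: five_smallest_vertices_def)
qed

theorem theorem5:
  assumes "CARD('n::{finite,linorder}) \<ge> 6"
  shows "graph_diameter (skel_vertices (PYR :: (real ^ ('n \<times> 'n)) set))
           (skel_adj (PYR :: (real ^ ('n \<times> 'n)) set)) = 2"
proof -
  obtain m a b c d :: 'n and R where "five_smallest_vertices m a b c d R"
    using assms by (rule five_smallest_vertices_exist)
  then interpret five_smallest_vertices m a b c d R .
  let ?hub = "char_vec (pyr_edges ({} :: 'n set))"
  have b_hub: "skel_adj PYR (char_vec (pyr_edges {b})) ?hub"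
    and c_hub: "skel_adj PYR (char_vec (pyr_edges {c})) ?hub"
    using skel_adj_pyr_edges_hub[OF three_le_card] witnesses_inner pyr_edges_ne_hub by simp_all
  show ?thesis
  proof (rule graph_diameter_eq_2_if_hub)
    show "?hub \<in> skel_vertices PYR"
      using b_hub unfolding skel_adj_def by simp
    show "skel_adj PYR x ?hub \<and> skel_adj PYR ?hub x"
      if "x \<in> skel_vertices PYR" "x \<noteq> ?hub" for x
      using skel_adj_PYR_hub[OF three_le_card that] unfolding skel_adj_def by blast
    show "char_vec (pyr_edges {b}) \<in> skel_vertices PYR" "char_vec (pyr_edges {c}) \<in> skel_vertices PYR"
      using b_hub c_hub unfolding skel_adj_def by simp_all
    show "char_vec (pyr_edges {b}) \<noteq> char_vec (pyr_edges {c})"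
      using pyr_edges_witnesses_distinct(1) char_vec_inj doubleton_family_pyr_edges by blast
  qed (rule not_skel_adj_witnesses)
qed

end
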